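(* Let $G$ be a graph with $n$ nodes, GSO $\mathbf{\Delta}\in\mathbb{R}^{n\times n}$ and GWM $\boldsymbol{A}=n\mathbf{\Delta}$. Let $h:\mathbb{R}\to\mathbb{R}$ be continuous. Then for every $\mathbf{x}\in\mathbb{C}^n$, $$\psi_{h(\mathbf{\Delta})\mathbf{x}}=h(T_{W_{\boldsymbol{A}}})\psi_{\mathbf{x}}.$$
   Context: A graph with graph shift operator (GSO) is a triple $G=(V,E,\mathbf{\Delta})$ with $V=\{1,\dots,n\}$ and $\mathbf{\Delta}\in\mathbb{R}^{n\times n}$ symmetric; its graph weight matrix (GWM) is $\boldsymbol{A}=n\mathbf{\Delta}$. For continuous $h:\mathbb{R}\to\mathbb{R}$, $h(\mathbf{\Delta})$ and $h(T)$ for bounded self-adjoint operators $T$ are defined by continuous functional calculus (via orthonormal eigendecompositions, including the kernel). For $n\in\mathbb{N}$ let $P_k=[(k-1)/n,k/n)$. For $\boldsymbol{B}\in\mathbb{R}^{n\times n}$, $W_{\boldsymbol{B}}(u,v)=\sum_{i,j}\boldsymbol{B}_{ij}\chi_{P_i}(u)\chi_{P_j}(v)$; $T_W\psi(v)=\int_0^1W(v,u)\psi(u)\,du$ on $L^2[0,1]$. For $\mathbf{x}\in\mathbb{C}^n$ the induced signal is $\psi_{\mathbf{x}}=\sum_j x_j\chi_{P_j}$. *)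

theory Defs
  imports "HOL-Analysis.Analysis"
begin

text \<open>Nodes are indexed 0..n-1 (node k+1 of the paper is index k).
  Matrices in R^{n x n} are functions nat => nat => real (only entries with indices < n matter),
  vectors in C^n are functions nat => complex. Signals on [0,1] are functions real => complex;
  L^2[0,1] elements are identified up to equality almost everywhere on [0,1].\<close>

definition orth_eigdecomp_mat :: "nat \<Rightarrow> (nat \<Rightarrow> nat \<Rightarrow> real) \<Rightarrow> (nat \<Rightarrow> nat \<Rightarrow> real) \<Rightarrow> (nat \<Rightarrow> real) \<Rightarrow> bool" where
  "orth_eigdecomp_mat n D U lam \<longleftrightarrow>
     (\<forall>i<n. \<forall>j<n. (\<Sum>k<n. U k i * U k j) = (if i = j then 1 else 0)) \<and>
     (\<forall>i<n. \<forall>j<n. D i j = (\<Sum>k<n. U i k * lam k * U j k))"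

definition mat_fun :: "(real \<Rightarrow> real) \<Rightarrow> nat \<Rightarrow> (nat \<Rightarrow> nat \<Rightarrow> real) \<Rightarrow> (nat \<Rightarrow> nat \<Rightarrow> real)" where
  "mat_fun h n D = (SOME M. \<exists>U lam. orth_eigdecomp_mat n D U lam \<and>
       M = (\<lambda>i j. \<Sum>k<n. U i k * h (lam k) * U j k))"

definition mat_vec :: "nat \<Rightarrow> (nat \<Rightarrow> nat \<Rightarrow> real) \<Rightarrow> (nat \<Rightarrow> complex) \<Rightarrow> (nat \<Rightarrow> complex)" where
  "mat_vec n M x = (\<lambda>i. \<Sum>j<n. complex_of_real (M i j) * x j)"

text \<open>P k = [k/n, (k+1)/n) (0-indexed version of the paper's P_k = [(k-1)/n, k/n)).\<close>
definition interval_P :: "nat \<Rightarrow> nat \<Rightarrow> real set" where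
  "interval_P n k = {real k / real n ..< real (Suc k) / real n}"

definition W_of :: "nat \<Rightarrow> (nat \<Rightarrow> nat \<Rightarrow> real) \<Rightarrow> real \<Rightarrow> real \<Rightarrow> real" where
  "W_of n B u v = (\<Sum>i<n. \<Sum>j<n. B i j * indicator (interval_P n i) u * indicator (interval_P n j) v)"

definition signal_of :: "nat \<Rightarrow> (nat \<Rightarrow> complex) \<Rightarrow> real \<Rightarrow> complex" where
  "signal_of n x u = (\<Sum>j<n. x j * indicator (interval_P n j) u)"

definition T_op :: "(real \<Rightarrow> real \<Rightarrow> real) \<Rightarrow> (real \<Rightarrow> complex) \<Rightarrow> real \<Rightarrow> complex" where
  "T_op W psi v = (LINT u:{0..1}|lborel. complex_of_real (W v u) * psi u)"

definition sq_int01 :: "(real \<Rightarrow> complex) \<Rightarrow> bool" where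
  "sq_int01 f \<longleftrightarrow> f \<in> borel_measurable lborel \<and>
      set_integrable lborel {0..1} (\<lambda>u. (cmod (f u))\<^sup>2)"

definition inner01 :: "(real \<Rightarrow> complex) \<Rightarrow> (real \<Rightarrow> complex) \<Rightarrow> complex" where
  "inner01 f g = (LINT u:{0..1}|lborel. f u * cnj (g u))"

definition eq01 :: "(real \<Rightarrow> complex) \<Rightarrow> (real \<Rightarrow> complex) \<Rightarrow> bool" where
  "eq01 f g \<longleftrightarrow> (AE u in lborel. u \<in> {0..1} \<longrightarrow> f u = g u)"

text \<open>A finite orthonormal eigendecomposition of T on L^2[0,1]:
  T psi = sum_k lam_k <psi,phi_k> phi_k for every psi in L^2[0,1]; the kernel of T is the
  orthogonal complement of the span of the phi_k.\<close>
definition orth_eigdecomp_op :: "((real \<Rightarrow> complex) \<Rightarrow> (real \<Rightarrow> complex)) \<Rightarrow> nat \<Rightarrow> (nat \<Rightarrow> real) \<Rightarrow> (nat \<Rightarrow> real \<Rightarrow> complex) \<Rightarrow> bool" where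
  "orth_eigdecomp_op T K lam phi \<longleftrightarrow>
     (\<forall>k<K. sq_int01 (phi k)) \<and>
     (\<forall>k<K. \<forall>l<K. inner01 (phi k) (phi l) = (if k = l then 1 else 0)) \<and>
     (\<forall>psi. sq_int01 psi \<longrightarrow>
        eq01 (T psi) (\<lambda>v. \<Sum>k<K. complex_of_real (lam k) * inner01 psi (phi k) * phi k v))"

text \<open>h(T) psi = sum_k h(lam_k) <psi,phi_k> phi_k + h(0) * (projection of psi onto ker T).\<close>
definition op_fun :: "(real \<Rightarrow> real) \<Rightarrow> ((real \<Rightarrow> complex) \<Rightarrow> (real \<Rightarrow> complex)) \<Rightarrow> (real \<Rightarrow> complex) \<Rightarrow> (real \<Rightarrow> complex)" where
  "op_fun h T psi = (SOME g. \<exists>K lam phi. orth_eigdecomp_op T K lam phi \<and>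
      g = (\<lambda>v. (\<Sum>k<K. complex_of_real (h (lam k)) * inner01 psi (phi k) * phi k v)
              + complex_of_real (h 0) * (psi v - (\<Sum>k<K. inner01 psi (phi k) * phi k v))))"

end

theory Submission
  imports Defs "Jordan_Normal_Form.Spectral_Radius"
begin

text \<open>By the spectral theorem \<open>Delta = U diag(mu) U\<^sup>T\<close> with \<open>U\<close> orthogonal, and \<^const>\<open>mat_fun\<close>
  evaluates \<open>h\<close> through such a decomposition.  The operator \<open>T\<^sub>W\<^sub>A\<close> sends \<open>psi\<close> to the step function
  of \<open>Delta\<close> applied to the cell averages of \<open>psi\<close>, so the step functions \<open>sqrt n U\<^sub>k\<close> form an
  orthonormal eigensystem of \<open>T\<^sub>W\<^sub>A\<close> with eigenvalues \<open>mu\<^sub>k\<close>.  Computed in this eigensystem,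
  \<open>h(T\<^sub>W\<^sub>A) psi\<^sub>x\<close> is the step function of \<open>U diag(h(mu)) U\<^sup>T x = h(Delta) x\<close>; its kernel part
  vanishes because the \<open>U\<^sub>k\<close> span all step functions.

  Since \<^const>\<open>op_fun\<close> uses an arbitrary orthonormal eigendecomposition of the operator, it
  remains to see that the result does not depend on that choice.  For a polynomial \<open>h\<close> it is
  the polynomial in the operator itself; a general \<open>h\<close> only enters through its values at the
  finitely many eigenvalues and at \<open>0\<close>, where it agrees with an interpolating polynomial.\<close>

section \<open>Spectral theorem for real symmetric matrices\<close>

definition fmat_mult :: "nat \<Rightarrow> (nat \<Rightarrow> nat \<Rightarrow> real) \<Rightarrow> (nat \<Rightarrow> nat \<Rightarrow> real) \<Rightarrow> nat \<Rightarrow> nat \<Rightarrow> real" where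
  "fmat_mult n A B = (\<lambda>i j. \<Sum>k<n. A i k * B k j)"

definition fmat_transpose :: "(nat \<Rightarrow> nat \<Rightarrow> real) \<Rightarrow> nat \<Rightarrow> nat \<Rightarrow> real" where
  "fmat_transpose A = (\<lambda>i j. A j i)"

definition fmat_one :: "nat \<Rightarrow> nat \<Rightarrow> real" where
  "fmat_one = (\<lambda>i j. if i = j then 1 else 0)"

definition fmat_diag :: "(nat \<Rightarrow> real) \<Rightarrow> nat \<Rightarrow> nat \<Rightarrow> real" where
  "fmat_diag f = (\<lambda>i j. if i = j then f i else 0)"

definition fmat_eq :: "nat \<Rightarrow> (nat \<Rightarrow> nat \<Rightarrow> real) \<Rightarrow> (nat \<Rightarrow> nat \<Rightarrow> real) \<Rightarrow> bool" where
  "fmat_eq n A B \<longleftrightarrow> (\<forall>i<n. \<forall>j<n. A i j = B i j)"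

abbreviation fmat_orthogonal :: "nat \<Rightarrow> (nat \<Rightarrow> nat \<Rightarrow> real) \<Rightarrow> bool" where
  "fmat_orthogonal n Q \<equiv> fmat_eq n (fmat_mult n (fmat_transpose Q) Q) fmat_one"

abbreviation fmat_symmetric :: "nat \<Rightarrow> (nat \<Rightarrow> nat \<Rightarrow> real) \<Rightarrow> bool" where
  "fmat_symmetric n D \<equiv> \<forall>i<n. \<forall>j<n. D i j = D j i"

lemma fmat_eq_refl: "fmat_eq n A A"
  by (simp add: fmat_eq_def)

lemma fmat_eq_sym: "fmat_eq n A B \<Longrightarrow> fmat_eq n B A"
  by (simp add: fmat_eq_def)

lemma fmat_eq_trans: "fmat_eq n A B \<Longrightarrow> fmat_eq n B C \<Longrightarrow> fmat_eq n A C"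
  by (simp add: fmat_eq_def)

lemma fmat_mult_cong: "fmat_eq n A A' \<Longrightarrow> fmat_eq n B B' \<Longrightarrow> fmat_eq n (fmat_mult n A B) (fmat_mult n A' B')"
  unfolding fmat_eq_def fmat_mult_def by (auto intro!: sum.cong)

lemma fmat_mult_assoc: "fmat_mult n (fmat_mult n A B) C = fmat_mult n A (fmat_mult n B C)"
  unfolding fmat_mult_def
  by (auto simp: sum_distrib_left sum_distrib_right mult.assoc intro!: ext sum.swap[THEN trans])

lemma fmat_transpose_mult: "fmat_transpose (fmat_mult n A B) = fmat_mult n (fmat_transpose B) (fmat_transpose A)"
  unfolding fmat_transpose_def fmat_mult_def by (auto simp: mult.commute intro!: ext)

lemma sum_fmat_one_left: "i < n \<Longrightarrow> (\<Sum>k<n. fmat_one i k * f k) = f i"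
  unfolding fmat_one_def by (simp add: if_distrib[of "\<lambda>x. x * _"] cong: if_cong)

lemma sum_fmat_one_right: "j < n \<Longrightarrow> (\<Sum>k<n. f k * fmat_one k j) = f j"
  unfolding fmat_one_def by (simp add: if_distrib[of "\<lambda>x. _ * x"] cong: if_cong)

lemma fmat_one_mult: "fmat_eq n (fmat_mult n fmat_one A) A"
  unfolding fmat_eq_def fmat_mult_def by (simp add: sum_fmat_one_left)

lemma fmat_mult_one: "fmat_eq n (fmat_mult n A fmat_one) A"
  unfolding fmat_eq_def fmat_mult_def by (simp add: sum_fmat_one_right)

lemma fmat_mult_diag_transpose:
  "fmat_mult n (fmat_mult n U (fmat_diag f)) (fmat_transpose U) = (\<lambda>i j. \<Sum>k<n. U i k * f k * U j k)"
  unfolding fmat_mult_def fmat_diag_def fmat_transpose_def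
  by (auto intro!: ext sum.cong simp: if_distrib[of "\<lambda>x. _ * x"] cong: if_cong)

lemma orth_eigdecomp_mat_iff:
  "orth_eigdecomp_mat n D U lam \<longleftrightarrow>
     fmat_orthogonal n U \<and> fmat_eq n D (fmat_mult n (fmat_mult n U (fmat_diag lam)) (fmat_transpose U))"
  unfolding orth_eigdecomp_mat_def fmat_mult_diag_transpose fmat_eq_def
  by (auto simp: fmat_mult_def fmat_transpose_def fmat_one_def)

lemma fmat_orthogonal_transpose:
  assumes "fmat_orthogonal n U"
  shows "fmat_orthogonal n (fmat_transpose U)"
proof -
  let ?M = "mat n n (\<lambda>(i,j). U i j)"
  let ?T = "mat n n (\<lambda>(i,j). U j i)"
  have "?T * ?M = 1\<^sub>m n"
  proof (rule eq_matI)
    fix i j assume "i < dim_row (1\<^sub>m n :: real mat)" "j < dim_col (1\<^sub>m n :: real mat)"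
    then show "(?T * ?M) $$ (i, j) = 1\<^sub>m n $$ (i, j)"
      using assms by (simp add: scalar_prod_def lessThan_atLeast0 fmat_eq_def fmat_mult_def
          fmat_transpose_def fmat_one_def)
  qed auto
  then have MT: "?M * ?T = 1\<^sub>m n"
    by (rule mat_mult_left_right_inverse[rotated 2]) auto
  show ?thesis
    unfolding fmat_eq_def
  proof (intro allI impI)
    fix i j assume "i < n" "j < n"
    then have "(?M * ?T) $$ (i, j) = 1\<^sub>m n $$ (i, j)"
      by (simp only: MT)
    with \<open>i < n\<close> \<open>j < n\<close> show "fmat_mult n (fmat_transpose (fmat_transpose U)) (fmat_transpose U) i j = fmat_one i j"
      by (simp add: scalar_prod_def lessThan_atLeast0 fmat_mult_def fmat_transpose_def fmat_one_def)
  qed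
qed

lemma symmetric_eigenvalue_real:
  fixes D :: "nat \<Rightarrow> nat \<Rightarrow> real" and w :: "nat \<Rightarrow> complex"
  assumes sym: "fmat_symmetric n D"
    and eig: "\<And>i. i < n \<Longrightarrow> (\<Sum>j<n. complex_of_real (D i j) * w j) = c * w i"
    and nonzero: "i0 < n" "w i0 \<noteq> 0"
  shows "Im c = 0"
proof -
  define S where "S = (\<Sum>i<n. cnj (w i) * (\<Sum>j<n. complex_of_real (D i j) * w j))"
  define N where "N = (\<Sum>i<n. (cmod (w i))\<^sup>2)"
  have "(cmod (w i0))\<^sup>2 \<le> N"
    unfolding N_def using nonzero(1) by (intro member_le_sum) auto
  then have "N > 0"
    using nonzero(2) by (smt (verit) zero_less_norm_iff zero_less_power2)
  have "S = (\<Sum>i<n. c * (cnj (w i) * w i))"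
    unfolding S_def by (intro sum.cong) (auto simp: eig)
  also have "\<dots> = c * complex_of_real N"
    using complex_norm_square[of "w _"]
    by (simp add: N_def sum_distrib_left mult.commute del: of_real_power)
  finally have S: "S = c * complex_of_real N" .
  have "cnj S = (\<Sum>i<n. \<Sum>j<n. w i * complex_of_real (D i j) * cnj (w j))"
    unfolding S_def by (simp add: sum_distrib_left mult.commute mult.left_commute)
  also have "\<dots> = (\<Sum>j<n. \<Sum>i<n. w i * complex_of_real (D i j) * cnj (w j))"
    by (rule sum.swap)
  also have "\<dots> = S"
    unfolding S_def using sym by (auto simp: sum_distrib_left mult.commute mult.left_commute intro!: sum.cong)
  finally have "Im S = 0"
    by (metis cnj.simps(2) complex.expand neg_equal_zero)
  with S \<open>N > 0\<close> show ?thesis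
    by simp
qed

lemma symmetric_has_real_eigenvector:
  fixes D :: "nat \<Rightarrow> nat \<Rightarrow> real"
  assumes "0 < n" and sym: "fmat_symmetric n D"
  obtains i0 r l where "i0 < n" "r i0 \<noteq> 0" "\<And>i. i < n \<Longrightarrow> (\<Sum>j<n. D i j * r j) = l * r i"
proof -
  let ?C = "mat n n (\<lambda>(i,j). complex_of_real (D i j))"
  obtain c where "eigenvalue ?C c"
    using spectrum_non_empty[of ?C n] \<open>0 < n\<close> unfolding spectrum_def by auto
  then obtain v where "v \<in> carrier_vec n" "v \<noteq> 0\<^sub>v n" "?C *\<^sub>v v = c \<cdot>\<^sub>v v"
    unfolding eigenvalue_def eigenvector_def by auto
  define w where "w i = vec_index v i" for i
  have eig: "(\<Sum>j<n. complex_of_real (D i j) * w j) = c * w i" if "i < n" for i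
  proof -
    have "(?C *\<^sub>v v) $ i = (c \<cdot>\<^sub>v v) $ i"
      using \<open>?C *\<^sub>v v = c \<cdot>\<^sub>v v\<close> by simp
    with that \<open>v \<in> carrier_vec n\<close> show ?thesis
      by (simp add: scalar_prod_def lessThan_atLeast0 w_def)
  qed
  have "\<exists>i<n. w i \<noteq> 0"
  proof (rule ccontr)
    assume "\<not> (\<exists>i<n. w i \<noteq> 0)"
    then have "v = 0\<^sub>v n"
      using \<open>v \<in> carrier_vec n\<close> by (intro eq_vecI) (auto simp: w_def)
    with \<open>v \<noteq> 0\<^sub>v n\<close> show False ..
  qed
  then obtain i0 where i0: "i0 < n" "w i0 \<noteq> 0"
    by blast
  have "Im c = 0"
    using symmetric_eigenvalue_real[OF sym eig i0] .
  then have re: "(\<Sum>j<n. D i j * Re (w j)) = Re c * Re (w i)"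
    and im: "(\<Sum>j<n. D i j * Im (w j)) = Re c * Im (w i)" if "i < n" for i
    using arg_cong[OF eig[OF that], of Re] arg_cong[OF eig[OF that], of Im] by (simp_all add: Re_sum Im_sum)
  show ?thesis
  proof (cases "Re (w i0) = 0")
    case True
    with i0 have "Im (w i0) \<noteq> 0"
      using complex.expand[of "w i0" 0] by auto
    from i0(1) this im show ?thesis
      by (rule that)
  next
    case False
    from i0(1) this re show ?thesis
      by (rule that)
  qed
qed

lemma symmetric_has_unit_eigenvector:
  fixes D :: "nat \<Rightarrow> nat \<Rightarrow> real"
  assumes "0 < n" and "fmat_symmetric n D"
  obtains u l where "(\<Sum>i<n. (u i)\<^sup>2) = 1" "\<And>i. i < n \<Longrightarrow> (\<Sum>j<n. D i j * u j) = l * u i"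
proof -
  obtain i0 r l where "i0 < n" "r i0 \<noteq> 0" and eig: "\<And>i. i < n \<Longrightarrow> (\<Sum>j<n. D i j * r j) = l * r i"
    using symmetric_has_real_eigenvector[OF assms] by blast
  define N where "N = (\<Sum>i<n. (r i)\<^sup>2)"
  have "(r i0)\<^sup>2 \<le> N"
    unfolding N_def using \<open>i0 < n\<close> by (intro member_le_sum) auto
  with \<open>r i0 \<noteq> 0\<close> have "N > 0"
    by (smt (verit) zero_less_power2)
  define u where "u i = r i / sqrt N" for i
  have "(\<Sum>i<n. (u i)\<^sup>2) = (\<Sum>i<n. (r i)\<^sup>2) / N"
    unfolding u_def using \<open>N > 0\<close> by (simp add: power_divide sum_divide_distrib)
  then have "(\<Sum>i<n. (u i)\<^sup>2) = 1"
    using \<open>N > 0\<close> by (simp add: N_def)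
  moreover have "(\<Sum>j<n. D i j * u j) = l * u i" if "i < n" for i
    using eig[OF that] unfolding u_def by (simp add: sum_divide_distrib[symmetric])
  ultimately show ?thesis
    by (rule that)
qed

text \<open>For \<open>w = 0\<close> the division by zero makes this the identity.\<close>

definition householder :: "nat \<Rightarrow> (nat \<Rightarrow> real) \<Rightarrow> nat \<Rightarrow> nat \<Rightarrow> real" where
  "householder n w = (\<lambda>i j. fmat_one i j - 2 * w i * w j / (\<Sum>k<n. (w k)\<^sup>2))"

lemma householder_orthogonal: "fmat_orthogonal n (householder n w)"
  unfolding fmat_eq_def
proof (intro allI impI)
  fix i j assume "i < n" "j < n"
  define s where "s = (\<Sum>k<n. (w k)\<^sup>2)"
  have "fmat_mult n (fmat_transpose (householder n w)) (householder n w) i j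
      = (\<Sum>k<n. fmat_one i k * fmat_one k j - (2 * w j / s) * (fmat_one i k * w k)
          - (2 * w i / s) * (w k * fmat_one k j) + (4 * w i * w j / s\<^sup>2) * (w k)\<^sup>2)"
    unfolding fmat_mult_def fmat_transpose_def householder_def s_def[symmetric]
    by (intro sum.cong) (auto simp: algebra_simps power2_eq_square fmat_one_def)
  also have "\<dots> = (\<Sum>k<n. fmat_one i k * fmat_one k j) - (2 * w j / s) * (\<Sum>k<n. fmat_one i k * w k)
      - (2 * w i / s) * (\<Sum>k<n. w k * fmat_one k j) + (4 * w i * w j / s\<^sup>2) * (\<Sum>k<n. (w k)\<^sup>2)"
    by (simp only: sum.distrib sum_subtractf sum_distrib_left)
  also have "\<dots> = fmat_one i j - (2 * w j / s) * w i - (2 * w i / s) * w j + (4 * w i * w j / s\<^sup>2) * s"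
    using \<open>i < n\<close> \<open>j < n\<close> by (simp only: sum_fmat_one_left sum_fmat_one_right s_def)
  also have "\<dots> = fmat_one i j"
    by (cases "s = 0") (simp_all add: field_simps power2_eq_square)
  finally show "fmat_mult n (fmat_transpose (householder n w)) (householder n w) i j = fmat_one i j" .
qed

text \<open>The reflection with \<open>w = u - e\<^sub>0\<close> maps \<open>e\<^sub>0\<close> to \<open>u\<close>.\<close>

lemma unit_vector_orthogonal_completion:
  assumes "0 < n" and u: "(\<Sum>i<n. (u i)\<^sup>2) = (1::real)"
  obtains Q where "fmat_orthogonal n Q" "\<And>i. i < n \<Longrightarrow> Q i 0 = u i"
proof -
  define w where "w i = u i - fmat_one i 0" for i
  have "(\<Sum>k<n. (w k)\<^sup>2) = (\<Sum>k<n. (u k)\<^sup>2 - 2 * (fmat_one 0 k * u k) + fmat_one 0 k * fmat_one k 0)"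
    unfolding w_def by (intro sum.cong) (auto simp: fmat_one_def power2_eq_square algebra_simps)
  also have "\<dots> = 2 - 2 * u 0"
    using \<open>0 < n\<close> u by (simp add: sum.distrib sum_subtractf sum_distrib_left[symmetric] sum_fmat_one_left)
      (simp add: fmat_one_def)
  finally have s: "(\<Sum>k<n. (w k)\<^sup>2) = 2 - 2 * u 0" .
  have "householder n w i 0 = u i" if "i < n" for i
  proof (cases "u 0 = 1")
    case True
    have "(\<Sum>i<n. (u i)\<^sup>2) = (u 0)\<^sup>2 + (\<Sum>i\<in>{..<n} - {0}. (u i)\<^sup>2)"
      using \<open>0 < n\<close> by (subst sum.remove[of _ 0]) auto
    then have "\<forall>i\<in>{..<n} - {0}. (u i)\<^sup>2 = 0"
      using u True by (subst sum_nonneg_eq_0_iff[symmetric]) auto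
    with True that show ?thesis
      unfolding householder_def s by (auto simp: fmat_one_def)
  next
    case False
    then show ?thesis
      unfolding householder_def s by (simp add: w_def fmat_one_def field_simps)
  qed
  with householder_orthogonal show ?thesis
    by (rule that)
qed

lemma fmat_symmetric_conj:
  assumes "fmat_symmetric n D"
  shows "fmat_symmetric n (fmat_mult n (fmat_transpose Q) (fmat_mult n D Q))"
proof (intro allI impI)
  fix i j assume "i < n" "j < n"
  have "fmat_mult n (fmat_transpose Q) (fmat_mult n D Q) i j = (\<Sum>k<n. \<Sum>a<n. Q k i * D k a * Q a j)"
    by (simp add: fmat_mult_def fmat_transpose_def sum_distrib_left mult.assoc)
  also have "\<dots> = (\<Sum>a<n. \<Sum>k<n. Q a j * D a k * Q k i)"
    using assms by (subst sum.swap) (auto intro!: sum.cong)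
  also have "\<dots> = fmat_mult n (fmat_transpose Q) (fmat_mult n D Q) j i"
    by (simp add: fmat_mult_def fmat_transpose_def sum_distrib_left mult.assoc)
  finally show "fmat_mult n (fmat_transpose Q) (fmat_mult n D Q) i j = fmat_mult n (fmat_transpose Q) (fmat_mult n D Q) j i" .
qed

lemma orth_eigdecomp_mat_conj:
  assumes Q: "fmat_orthogonal n Q"
    and V: "orth_eigdecomp_mat n (fmat_mult n (fmat_transpose Q) (fmat_mult n D Q)) V lam"
  shows "orth_eigdecomp_mat n D (fmat_mult n Q V) lam"
proof -
  have Q': "fmat_eq n (fmat_mult n Q (fmat_transpose Q)) fmat_one"
    using fmat_orthogonal_transpose[OF Q] by (simp add: fmat_transpose_def)
  from V have V_orth: "fmat_orthogonal n V"
    and V_dec: "fmat_eq n (fmat_mult n (fmat_transpose Q) (fmat_mult n D Q))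
        (fmat_mult n (fmat_mult n V (fmat_diag lam)) (fmat_transpose V))"
    unfolding orth_eigdecomp_mat_iff by blast+
  have "fmat_orthogonal n (fmat_mult n Q V)"
  proof -
    have "fmat_eq n (fmat_mult n (fmat_transpose V) (fmat_mult n (fmat_mult n (fmat_transpose Q) Q) V))
        (fmat_mult n (fmat_transpose V) (fmat_mult n fmat_one V))"
      by (intro fmat_mult_cong fmat_eq_refl Q)
    moreover have "fmat_eq n (fmat_mult n (fmat_transpose V) (fmat_mult n fmat_one V)) (fmat_mult n (fmat_transpose V) V)"
      by (intro fmat_mult_cong fmat_eq_refl fmat_one_mult)
    ultimately show ?thesis
      using V_orth by (simp only: fmat_transpose_mult fmat_mult_assoc) (blast intro: fmat_eq_trans)
  qed
  moreover have "fmat_eq n D (fmat_mult n (fmat_mult n (fmat_mult n Q V) (fmat_diag lam)) (fmat_transpose (fmat_mult n Q V)))"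
  proof -
    have "fmat_eq n D (fmat_mult n fmat_one (fmat_mult n D fmat_one))"
      by (rule fmat_eq_sym, rule fmat_eq_trans[OF fmat_one_mult fmat_mult_one])
    moreover have "fmat_eq n (fmat_mult n fmat_one (fmat_mult n D fmat_one))
        (fmat_mult n (fmat_mult n Q (fmat_transpose Q)) (fmat_mult n D (fmat_mult n Q (fmat_transpose Q))))"
      by (intro fmat_mult_cong fmat_eq_refl fmat_eq_sym[OF Q'])
    moreover have "fmat_eq n (fmat_mult n Q (fmat_mult n (fmat_mult n (fmat_transpose Q) (fmat_mult n D Q)) (fmat_transpose Q)))
        (fmat_mult n Q (fmat_mult n (fmat_mult n (fmat_mult n V (fmat_diag lam)) (fmat_transpose V)) (fmat_transpose Q)))"
      by (intro fmat_mult_cong fmat_eq_refl V_dec)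
    ultimately show ?thesis
      by (simp only: fmat_transpose_mult fmat_mult_assoc) (blast intro: fmat_eq_trans)
  qed
  ultimately show ?thesis
    unfolding orth_eigdecomp_mat_iff by blast
qed

fun fmat_border :: "(nat \<Rightarrow> nat \<Rightarrow> real) \<Rightarrow> nat \<Rightarrow> nat \<Rightarrow> real" where
  "fmat_border U 0 0 = 1"
| "fmat_border U 0 (Suc j) = 0"
| "fmat_border U (Suc i) 0 = 0"
| "fmat_border U (Suc i) (Suc j) = U i j"

lemma orth_eigdecomp_mat_border:
  assumes col0: "\<And>i. i < Suc m \<Longrightarrow> B i 0 = (if i = 0 then l else 0)"
    and sym: "fmat_symmetric (Suc m) B"
    and dec: "orth_eigdecomp_mat m (\<lambda>i j. B (Suc i) (Suc j)) U lam"
  shows "orth_eigdecomp_mat (Suc m) B (fmat_border U) (case_nat l lam)"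
proof -
  from dec have U_orth: "\<And>i j. i < m \<Longrightarrow> j < m \<Longrightarrow> (\<Sum>k<m. U k i * U k j) = (if i = j then 1 else 0)"
    and U_dec: "\<And>i j. i < m \<Longrightarrow> j < m \<Longrightarrow> B (Suc i) (Suc j) = (\<Sum>k<m. U i k * lam k * U j k)"
    unfolding orth_eigdecomp_mat_def by auto
  have row0: "B 0 j = (if j = 0 then l else 0)" if "j < Suc m" for j
    using sym[rule_format, OF zero_less_Suc that] col0[OF that] by simp
  have "(\<Sum>k<Suc m. fmat_border U k i * fmat_border U k j) = (if i = j then 1 else 0)"
    if "i < Suc m" "j < Suc m" for i j
    unfolding sum.lessThan_Suc_shift using that U_orth by (cases i; cases j) simp_all
  moreover have "B i j = (\<Sum>k<Suc m. fmat_border U i k * case_nat l lam k * fmat_border U j k)"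
    if "i < Suc m" "j < Suc m" for i j
    unfolding sum.lessThan_Suc_shift using that col0 row0 U_dec by (cases i; cases j) simp_all
  ultimately show ?thesis
    unfolding orth_eigdecomp_mat_def by blast
qed

lemma conj_orthogonal_eigenvector_first_column:
  assumes Q: "fmat_orthogonal n Q" and Q0: "\<And>i. i < n \<Longrightarrow> Q i 0 = u i"
    and eig: "\<And>i. i < n \<Longrightarrow> (\<Sum>j<n. D i j * u j) = l * u i" and "i < n"
  shows "fmat_mult n (fmat_transpose Q) (fmat_mult n D Q) i 0 = (if i = 0 then l else 0)"
proof -
  have "fmat_mult n D Q k 0 = l * Q k 0" if "k < n" for k
  proof -
    have "fmat_mult n D Q k 0 = (\<Sum>a<n. D k a * u a)"
      unfolding fmat_mult_def by (intro sum.cong) (auto simp: Q0)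
    also have "\<dots> = l * u k"
      by (rule eig[OF that])
    finally show ?thesis
      using that by (simp add: Q0)
  qed
  then have "fmat_mult n (fmat_transpose Q) (fmat_mult n D Q) i 0 = (\<Sum>k<n. fmat_transpose Q i k * (l * Q k 0))"
    unfolding fmat_mult_def[of _ "fmat_transpose Q"] by (intro sum.cong) auto
  also have "\<dots> = l * fmat_mult n (fmat_transpose Q) Q i 0"
    unfolding fmat_mult_def sum_distrib_left by (simp add: mult_ac)
  also have "\<dots> = (if i = 0 then l else 0)"
    using Q \<open>i < n\<close> by (simp add: fmat_eq_def fmat_one_def)
  finally show ?thesis .
qed

text \<open>Deflation: conjugating \<open>D\<close> by an orthogonal \<open>Q\<close> whose first column is a unit eigenvector
  splits off a \<open>1 \<times> 1\<close> block, and the remaining block is decomposed by induction.\<close>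

theorem symmetric_orth_eigdecomp_mat:
  fixes D :: "nat \<Rightarrow> nat \<Rightarrow> real"
  assumes "fmat_symmetric n D"
  shows "\<exists>U lam. orth_eigdecomp_mat n D U lam"
  using assms
proof (induction n arbitrary: D)
  case 0
  then show ?case
    by (simp add: orth_eigdecomp_mat_def)
next
  case (Suc m)
  obtain u l where u: "(\<Sum>i<Suc m. (u i)\<^sup>2) = 1" and eig: "\<And>i. i < Suc m \<Longrightarrow> (\<Sum>j<Suc m. D i j * u j) = l * u i"
    using symmetric_has_unit_eigenvector[OF _ Suc.prems] by blast
  obtain Q where Q: "fmat_orthogonal (Suc m) Q" and Q0: "\<And>i. i < Suc m \<Longrightarrow> Q i 0 = u i"
    using unit_vector_orthogonal_completion[OF _ u] by blast
  define B where "B = fmat_mult (Suc m) (fmat_transpose Q) (fmat_mult (Suc m) D Q)"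
  have B_sym: "fmat_symmetric (Suc m) B"
    unfolding B_def using Suc.prems by (rule fmat_symmetric_conj)
  have "B i 0 = (if i = 0 then l else 0)" if "i < Suc m" for i
    unfolding B_def using Q Q0 eig that by (rule conj_orthogonal_eigenvector_first_column)
  moreover obtain U lam where "orth_eigdecomp_mat m (\<lambda>i j. B (Suc i) (Suc j)) U lam"
    using Suc.IH B_sym by force
  ultimately have "orth_eigdecomp_mat (Suc m) B (fmat_border U) (case_nat l lam)"
    using B_sym by (intro orth_eigdecomp_mat_border)
  then show ?case
    unfolding B_def using orth_eigdecomp_mat_conj[OF Q] by blast
qed

lemma mat_fun_eigdecomp:
  assumes "fmat_symmetric n D"
  obtains U lam where "orth_eigdecomp_mat n D U lam"
    "mat_fun h n D = (\<lambda>i j. \<Sum>k<n. U i k * h (lam k) * U j k)"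
proof -
  have "\<exists>M U lam. orth_eigdecomp_mat n D U lam \<and> M = (\<lambda>i j. \<Sum>k<n. U i k * h (lam k) * U j k)"
    using symmetric_orth_eigdecomp_mat[OF assms] by blast
  from someI_ex[OF this] show ?thesis
    using that unfolding mat_fun_def by blast
qed

section \<open>Square-integrable functions on \<open>[0,1]\<close>\<close>

lemma borel_measurable_cnj [measurable]:
  "f \<in> borel_measurable M \<Longrightarrow> (\<lambda>x. cnj (f x)) \<in> borel_measurable M"
  by (rule borel_measurable_continuous_on[where f = cnj]) (auto intro: continuous_intros)

lemma set_borel_measurable_lborelI:
  fixes g :: "real \<Rightarrow> 'b::{banach, second_countable_topology}"
  assumes "g \<in> borel_measurable lborel" "A \<in> sets lborel"
  shows "set_borel_measurable lborel A g"
proof -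
  have [measurable]: "g \<in> borel_measurable borel" "A \<in> sets borel"
    using assms by auto
  show ?thesis
    unfolding set_borel_measurable_def by measurable
qed

lemma sq_int01_measurable: "sq_int01 f \<Longrightarrow> f \<in> borel_measurable borel"
  unfolding sq_int01_def by simp

lemma sq_int01_add:
  assumes "sq_int01 f" "sq_int01 g"
  shows "sq_int01 (\<lambda>u. f u + g u)"
  unfolding sq_int01_def
proof
  note [measurable] = sq_int01_measurable[OF assms(1)] sq_int01_measurable[OF assms(2)]
  show "(\<lambda>u. f u + g u) \<in> borel_measurable lborel"
    by measurable
  have "set_integrable lborel {0..1} (\<lambda>u. 2 * (cmod (f u))\<^sup>2 + 2 * (cmod (g u))\<^sup>2)"
    using assms unfolding sq_int01_def by (intro set_integral_add) auto
  moreover have "set_borel_measurable lborel {0..1} (\<lambda>u. (cmod (f u + g u))\<^sup>2)"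
    by (intro set_borel_measurable_lborelI) auto
  moreover have "AE x in lborel. x \<in> {0..1} \<longrightarrow>
      norm ((cmod (f x + g x))\<^sup>2) \<le> norm (2 * (cmod (f x))\<^sup>2 + 2 * (cmod (g x))\<^sup>2)"
  proof (intro AE_I2 impI)
    fix x
    have "(cmod (f x + g x))\<^sup>2 \<le> (cmod (f x) + cmod (g x))\<^sup>2"
      using norm_triangle_ineq by (intro power_mono) auto
    also have "\<dots> \<le> 2 * (cmod (f x))\<^sup>2 + 2 * (cmod (g x))\<^sup>2"
      using sum_squares_bound[of "cmod (f x)" "cmod (g x)"] by (simp add: power2_sum)
    finally show "norm ((cmod (f x + g x))\<^sup>2) \<le> norm (2 * (cmod (f x))\<^sup>2 + 2 * (cmod (g x))\<^sup>2)"
      by simp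
  qed
  ultimately show "set_integrable lborel {0..1} (\<lambda>u. (cmod (f u + g u))\<^sup>2)"
    by (rule set_integrable_bound)
qed

lemma sq_int01_mult:
  assumes "sq_int01 f"
  shows "sq_int01 (\<lambda>u. c * f u)"
proof -
  note [measurable] = sq_int01_measurable[OF assms]
  show ?thesis
    using assms unfolding sq_int01_def by (simp add: norm_mult power_mult_distrib)
qed

lemma sq_int01_sum:
  assumes "finite I" "\<And>i. i \<in> I \<Longrightarrow> sq_int01 (f i)"
  shows "sq_int01 (\<lambda>u. \<Sum>i\<in>I. f i u)"
  using assms
proof (induction I rule: finite_induct)
  case empty
  then show ?case
    by (simp add: sq_int01_def set_integrable_def)
next
  case (insert x F)
  then show ?case
    by (simp add: sq_int01_add)
qed

lemma sq_int01_diff: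
  assumes "sq_int01 f" "sq_int01 g"
  shows "sq_int01 (\<lambda>u. f u - g u)"
  using sq_int01_add[OF assms(1) sq_int01_mult[OF assms(2), of "-1"]] by simp

lemma sq_int01_indicator:
  assumes "A \<in> sets lborel"
  shows "sq_int01 (\<lambda>u. indicator A u :: complex)"
  unfolding sq_int01_def
proof
  show "(\<lambda>u. indicator A u :: complex) \<in> borel_measurable lborel"
    using assms by simp
  have "integrable lborel (indicator {0..1::real} :: real \<Rightarrow> real)"
    by (rule integrable_real_indicator) auto
  then have "set_integrable lborel {0..1::real} (\<lambda>_. 1::real)"
    by (simp add: set_integrable_def)
  moreover have "set_borel_measurable lborel {0..1} (\<lambda>u. (cmod (indicator A u :: complex))\<^sup>2)"
    using assms by (intro set_borel_measurable_lborelI) auto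
  moreover have "AE u in lborel. u \<in> {0..1} \<longrightarrow> norm ((cmod (indicator A u :: complex))\<^sup>2) \<le> norm (1::real)"
    by (intro AE_I2) (simp add: indicator_def)
  ultimately show "set_integrable lborel {0..1} (\<lambda>u. (cmod (indicator A u :: complex))\<^sup>2)"
    by (rule set_integrable_bound)
qed

lemma set_integrable_mult_cnj:
  assumes "sq_int01 f" "sq_int01 g"
  shows "set_integrable lborel {0..1} (\<lambda>u. f u * cnj (g u))"
proof -
  have "set_integrable lborel {0..1} (\<lambda>u. (cmod (f u))\<^sup>2 + (cmod (g u))\<^sup>2)"
    using assms unfolding sq_int01_def by (intro set_integral_add) auto
  moreover have "set_borel_measurable lborel {0..1} (\<lambda>u. f u * cnj (g u))"
    using sq_int01_measurable[OF assms(1)] sq_int01_measurable[OF assms(2)]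
    by (intro set_borel_measurable_lborelI) auto
  moreover have "AE x in lborel. x \<in> {0..1} \<longrightarrow>
      norm (f x * cnj (g x)) \<le> norm ((cmod (f x))\<^sup>2 + (cmod (g x))\<^sup>2)"
  proof (intro AE_I2 impI)
    fix x
    have "cmod (f x) * cmod (g x) \<le> (cmod (f x))\<^sup>2 + (cmod (g x))\<^sup>2"
      using sum_squares_bound[of "cmod (f x)" "cmod (g x)"]
        mult_nonneg_nonneg[OF norm_ge_zero[of "f x"] norm_ge_zero[of "g x"]] by linarith
    then show "norm (f x * cnj (g x)) \<le> norm ((cmod (f x))\<^sup>2 + (cmod (g x))\<^sup>2)"
      by (simp add: norm_mult)
  qed
  ultimately show ?thesis
    by (rule set_integrable_bound)
qed

lemma inner01_add:
  assumes "sq_int01 f" "sq_int01 g" "sq_int01 h"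
  shows "inner01 (\<lambda>u. f u + g u) h = inner01 f h + inner01 g h"
  unfolding inner01_def using set_integrable_mult_cnj[OF assms(1,3)] set_integrable_mult_cnj[OF assms(2,3)]
  by (simp add: distrib_right)

lemma inner01_mult: "inner01 (\<lambda>u. c * f u) h = c * inner01 f h"
  unfolding inner01_def by (simp add: mult.assoc)

lemma inner01_diff:
  assumes "sq_int01 f" "sq_int01 g" "sq_int01 h"
  shows "inner01 (\<lambda>u. f u - g u) h = inner01 f h - inner01 g h"
  unfolding inner01_def using set_integrable_mult_cnj[OF assms(1,3)] set_integrable_mult_cnj[OF assms(2,3)]
  by (simp add: left_diff_distrib)

lemma inner01_sum:
  assumes "finite I" "\<And>i. i \<in> I \<Longrightarrow> sq_int01 (f i)" "sq_int01 h"
  shows "inner01 (\<lambda>u. \<Sum>i\<in>I. f i u) h = (\<Sum>i\<in>I. inner01 (f i) h)"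
  using assms(1,2)
proof (induction I rule: finite_induct)
  case empty
  then show ?case
    by (simp add: inner01_def)
next
  case (insert x F)
  then have "inner01 (\<lambda>u. f x u + (\<Sum>i\<in>F. f i u)) h = inner01 (f x) h + inner01 (\<lambda>u. \<Sum>i\<in>F. f i u) h"
    using assms(3) by (intro inner01_add sq_int01_sum) auto
  with insert show ?case
    by simp
qed

lemma inner01_eq01_cong:
  assumes "sq_int01 f" "sq_int01 g" "sq_int01 h" "eq01 f g"
  shows "inner01 f h = inner01 g h"
  unfolding inner01_def
proof (rule set_lebesgue_integral_cong_AE)
  show "(\<lambda>u. f u * cnj (h u)) \<in> borel_measurable lborel" "(\<lambda>u. g u * cnj (h u)) \<in> borel_measurable lborel"
    using sq_int01_measurable[OF assms(1)] sq_int01_measurable[OF assms(2)] sq_int01_measurable[OF assms(3)]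
    by auto
  show "AE x\<in>{0..1} in lborel. f x * cnj (h x) = g x * cnj (h x)"
    using assms(4) unfolding eq01_def by eventually_elim auto
qed simp

lemma eq01_refl: "eq01 f f"
  unfolding eq01_def by simp

lemma eq01_sym: "eq01 f g \<Longrightarrow> eq01 g f"
  unfolding eq01_def by (auto elim: AE_mp)

lemma eq01_trans [trans]:
  assumes "eq01 f g" "eq01 g k"
  shows "eq01 f k"
  using assms unfolding eq01_def by eventually_elim auto

lemma eq01_add_left:
  assumes "eq01 f g"
  shows "eq01 (\<lambda>v. c v + f v) (\<lambda>v. c v + g v)"
  using assms unfolding eq01_def by eventually_elim auto

section \<open>Functional calculus of an orthonormal eigendecomposition\<close>

definition eig_op_fun :: "(real \<Rightarrow> real) \<Rightarrow> nat \<Rightarrow> (nat \<Rightarrow> real) \<Rightarrow> (nat \<Rightarrow> real \<Rightarrow> complex) \<Rightarrow>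
    (real \<Rightarrow> complex) \<Rightarrow> real \<Rightarrow> complex" where
  "eig_op_fun f K lam phi psi = (\<lambda>v. (\<Sum>k<K. complex_of_real (f (lam k)) * inner01 psi (phi k) * phi k v)
      + complex_of_real (f 0) * (psi v - (\<Sum>k<K. inner01 psi (phi k) * phi k v)))"

lemma op_fun_alt_def:
  "op_fun h T psi = (SOME g. \<exists>K lam phi. orth_eigdecomp_op T K lam phi \<and> g = eig_op_fun h K lam phi psi)"
  unfolding op_fun_def eig_op_fun_def ..

lemma sq_int01_lincomb:
  fixes phi :: "nat \<Rightarrow> real \<Rightarrow> complex"
  shows "(\<And>k. k < K \<Longrightarrow> sq_int01 (phi k)) \<Longrightarrow> sq_int01 (\<lambda>v. \<Sum>k<K. c k * phi k v)"
  by (intro sq_int01_sum sq_int01_mult) auto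

lemma inner01_lincomb_orthonormal:
  fixes phi :: "nat \<Rightarrow> real \<Rightarrow> complex"
  assumes "\<And>k. k < K \<Longrightarrow> sq_int01 (phi k)"
    and "\<And>k l. k < K \<Longrightarrow> l < K \<Longrightarrow> inner01 (phi k) (phi l) = (if k = l then 1 else 0)"
    and "j < K"
  shows "inner01 (\<lambda>v. \<Sum>k<K. c k * phi k v) (phi j) = c j"
proof -
  have "inner01 (\<lambda>v. \<Sum>k<K. c k * phi k v) (phi j) = (\<Sum>k<K. c k * inner01 (phi k) (phi j))"
    using assms by (subst inner01_sum) (auto intro: sq_int01_mult simp: inner01_mult)
  also have "\<dots> = (\<Sum>k<K. if k = j then c k else 0)"
    using assms(2,3) by (intro sum.cong) auto
  finally show ?thesis
    using \<open>j < K\<close> by simp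
qed

lemma orth_eigdecomp_opD:
  assumes "orth_eigdecomp_op T K lam phi"
  shows "\<And>k. k < K \<Longrightarrow> sq_int01 (phi k)"
    and "\<And>k l. k < K \<Longrightarrow> l < K \<Longrightarrow> inner01 (phi k) (phi l) = (if k = l then 1 else 0)"
    and "\<And>psi. sq_int01 psi \<Longrightarrow>
           eq01 (T psi) (\<lambda>v. \<Sum>k<K. complex_of_real (lam k) * inner01 psi (phi k) * phi k v)"
  using assms unfolding orth_eigdecomp_op_def by auto

lemma sq_int01_eig_op_fun:
  assumes "orth_eigdecomp_op T K lam phi" "sq_int01 psi"
  shows "sq_int01 (eig_op_fun f K lam phi psi)"
  unfolding eig_op_fun_def
  by (intro sq_int01_add sq_int01_mult sq_int01_diff sq_int01_lincomb orth_eigdecomp_opD[OF assms(1)] assms(2))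

lemma inner01_eig_op_fun:
  assumes D: "orth_eigdecomp_op T K lam phi" and psi: "sq_int01 psi" and "j < K"
  shows "inner01 (eig_op_fun f K lam phi psi) (phi j) = complex_of_real (f (lam j)) * inner01 psi (phi j)"
proof -
  let ?F = "\<lambda>v. \<Sum>k<K. (complex_of_real (f (lam k)) * inner01 psi (phi k)) * phi k v"
  let ?P = "\<lambda>v. \<Sum>k<K. inner01 psi (phi k) * phi k v"
  have F: "sq_int01 ?F" and P: "sq_int01 ?P" and phi_j: "sq_int01 (phi j)"
    using orth_eigdecomp_opD(1)[OF D] \<open>j < K\<close> by (auto intro: sq_int01_lincomb)
  have "inner01 (eig_op_fun f K lam phi psi) (phi j)
      = inner01 ?F (phi j) + complex_of_real (f 0) * (inner01 psi (phi j) - inner01 ?P (phi j))"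
    unfolding eig_op_fun_def mult.assoc[symmetric]
    by (simp add: inner01_add[OF F sq_int01_mult[OF sq_int01_diff[OF psi P]] phi_j]
        inner01_mult inner01_diff[OF psi P phi_j])
  also have "\<dots> = complex_of_real (f (lam j)) * inner01 psi (phi j)"
    using inner01_lincomb_orthonormal[OF orth_eigdecomp_opD(1,2)[OF D] \<open>j < K\<close>] by simp
  finally show ?thesis .
qed

lemma eig_op_fun_apply:
  assumes D: "orth_eigdecomp_op T K lam phi" and psi: "sq_int01 psi"
  shows "eq01 (T (eig_op_fun f K lam phi psi)) (eig_op_fun (\<lambda>t. t * f t) K lam phi psi)"
proof -
  have "(\<lambda>v. \<Sum>k<K. complex_of_real (lam k) * inner01 (eig_op_fun f K lam phi psi) (phi k) * phi k v)
      = eig_op_fun (\<lambda>t. t * f t) K lam phi psi"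
    unfolding eig_op_fun_def[of "\<lambda>t. t * f t"]
    by (rule ext, simp, intro sum.cong refl) (simp add: inner01_eig_op_fun[OF D psi] mult.assoc)
  with orth_eigdecomp_opD(3)[OF D sq_int01_eig_op_fun[OF D psi, where f = f]] show ?thesis
    by simp
qed

lemma eig_op_fun_add_const:
  "eig_op_fun (\<lambda>t. c + g t) K lam phi psi = (\<lambda>v. complex_of_real c * psi v + eig_op_fun g K lam phi psi v)"
  unfolding eig_op_fun_def
  by (simp add: algebra_simps sum.distrib sum_distrib_left)

lemma eig_op_fun_cong:
  assumes "\<And>k. k < K \<Longrightarrow> f (lam k) = g (lam k)" "f 0 = g 0"
  shows "eig_op_fun f K lam phi psi = eig_op_fun g K lam phi psi"
  unfolding eig_op_fun_def using assms by (auto intro!: ext sum.cong)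

lemma orth_eigdecomp_op_eq01_cong:
  assumes D: "orth_eigdecomp_op T K lam phi" and "sq_int01 f" "sq_int01 g" "eq01 f g"
  shows "eq01 (T f) (T g)"
proof -
  note sq = orth_eigdecomp_opD(1)[OF D] and dec = orth_eigdecomp_opD(3)[OF D]
  have "(\<lambda>v. \<Sum>k<K. complex_of_real (lam k) * inner01 f (phi k) * phi k v)
      = (\<lambda>v. \<Sum>k<K. complex_of_real (lam k) * inner01 g (phi k) * phi k v)"
    using inner01_eq01_cong[OF assms(2,3) _ assms(4)] sq by (auto intro!: ext sum.cong)
  then have "eq01 (T f) (\<lambda>v. \<Sum>k<K. complex_of_real (lam k) * inner01 g (phi k) * phi k v)"
    using dec[OF assms(2)] by simp
  then show ?thesis
    using eq01_sym[OF dec[OF assms(3)]] by (rule eq01_trans)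
qed

lemma poly_interpolation:
  fixes h :: "real \<Rightarrow> real"
  assumes "finite E"
  obtains p where "\<And>x. x \<in> E \<Longrightarrow> poly p x = h x"
  using assms
proof (induction E arbitrary: thesis rule: finite_induct)
  case empty
  then show ?case
    by simp
next
  case (insert a E)
  then obtain p where p: "\<And>x. x \<in> E \<Longrightarrow> poly p x = h x"
    by blast
  define q where "q = (\<Prod>e\<in>E. [:-e, 1:])"
  have q: "poly q x = (\<Prod>e\<in>E. x - e)" for x
    unfolding q_def by (simp add: poly_prod)
  then have "poly q a \<noteq> 0" "\<And>x. x \<in> E \<Longrightarrow> poly q x = 0"
    using insert by (auto simp: prod_zero_iff)
  then have "poly (p + Polynomial.smult ((h a - poly p a) / poly q a) q) x = h x" if "x \<in> insert a E" for x
    using p that by auto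
  then show ?case
    by (rule insert.prems)
qed

lemma eig_op_fun_poly_unique:
  assumes D1: "orth_eigdecomp_op T K1 l1 p1" and D2: "orth_eigdecomp_op T K2 l2 p2"
    and psi: "sq_int01 psi"
  shows "eq01 (eig_op_fun (poly p) K1 l1 p1 psi) (eig_op_fun (poly p) K2 l2 p2 psi)"
proof (induction p rule: pCons_induct)
  case 0
  show ?case
    unfolding eig_op_fun_def by (simp add: eq01_refl)
next
  case (pCons a p)
  have "eq01 (eig_op_fun (\<lambda>t. t * poly p t) K1 l1 p1 psi) (T (eig_op_fun (poly p) K1 l1 p1 psi))"
    using eig_op_fun_apply[OF D1 psi] by (rule eq01_sym)
  also have "eq01 \<dots> (T (eig_op_fun (poly p) K2 l2 p2 psi))"
    using D1 sq_int01_eig_op_fun[OF D1 psi] sq_int01_eig_op_fun[OF D2 psi] pCons.IH by (rule orth_eigdecomp_op_eq01_cong)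
  also have "eq01 \<dots> (eig_op_fun (\<lambda>t. t * poly p t) K2 l2 p2 psi)"
    by (rule eig_op_fun_apply[OF D2 psi])
  finally show ?case
    unfolding poly_pCons eig_op_fun_add_const by (rule eq01_add_left)
qed

lemma eig_op_fun_unique:
  assumes D1: "orth_eigdecomp_op T K1 l1 p1" and D2: "orth_eigdecomp_op T K2 l2 p2"
    and psi: "sq_int01 psi"
  shows "eq01 (eig_op_fun h K1 l1 p1 psi) (eig_op_fun h K2 l2 p2 psi)"
proof -
  obtain p where p: "\<And>x. x \<in> l1 ` {..<K1} \<union> l2 ` {..<K2} \<union> {0} \<Longrightarrow> poly p x = h x"
    using poly_interpolation[of "l1 ` {..<K1} \<union> l2 ` {..<K2} \<union> {0}"] by blast
  have "eig_op_fun h K1 l1 p1 psi = eig_op_fun (poly p) K1 l1 p1 psi"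
    "eig_op_fun h K2 l2 p2 psi = eig_op_fun (poly p) K2 l2 p2 psi"
    using p by (auto intro: eig_op_fun_cong)
  with eig_op_fun_poly_unique[OF D1 D2 psi] show ?thesis
    by simp
qed

lemma op_fun_eq01_eig_op_fun:
  assumes D: "orth_eigdecomp_op T K lam phi" and psi: "sq_int01 psi"
  shows "eq01 (op_fun h T psi) (eig_op_fun h K lam phi psi)"
proof -
  have "\<exists>g K lam phi. orth_eigdecomp_op T K lam phi \<and> g = eig_op_fun h K lam phi psi"
    using D by blast
  from someI_ex[OF this] obtain K' lam' phi' where D': "orth_eigdecomp_op T K' lam' phi'"
    and "op_fun h T psi = eig_op_fun h K' lam' phi' psi"
    unfolding op_fun_alt_def by blast
  with eig_op_fun_unique[OF D' D psi] show ?thesis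
    by simp
qed

section \<open>Step functions and the graphon operator\<close>

lemma signal_of_lincomb:
  "(\<Sum>k<K. c k * signal_of n (y k) v) = signal_of n (\<lambda>i. \<Sum>k<K. c k * y k i) v"
  unfolding signal_of_def sum_distrib_left sum_distrib_right mult.assoc by (rule sum.swap)

lemma signal_of_cong: "(\<And>i. i < n \<Longrightarrow> y i = z i) \<Longrightarrow> signal_of n y = signal_of n z"
  unfolding signal_of_def by (auto intro!: ext sum.cong)

lemma mat_vec_cong:
  "(\<And>i j. i < n \<Longrightarrow> j < n \<Longrightarrow> M i j = M' i j) \<Longrightarrow> (\<And>j. j < n \<Longrightarrow> x j = x' j) \<Longrightarrow>
    i < n \<Longrightarrow> mat_vec n M x i = mat_vec n M' x' i"
  unfolding mat_vec_def by (auto intro!: sum.cong)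

lemma interval_P_measurable [measurable]: "interval_P n j \<in> sets borel"
  unfolding interval_P_def by simp

lemma interval_P_subset:
  assumes "j < n"
  shows "interval_P n j \<subseteq> {0..1}"
proof
  fix u assume "u \<in> interval_P n j"
  then have "real j / real n \<le> u" "u < real (Suc j) / real n"
    by (auto simp: interval_P_def)
  moreover have "real (Suc j) / real n \<le> 1"
    using assms by (simp add: divide_le_eq_1)
  ultimately show "u \<in> {0..1}"
    by (smt (verit) atLeastAtMost_iff divide_nonneg_nonneg of_nat_0_le_iff)
qed

lemma interval_P_disjoint:
  assumes "i \<noteq> j"
  shows "interval_P n i \<inter> interval_P n j = {}"
proof -
  have "interval_P n a \<inter> interval_P n b = {}" if "a < b" for a b
  proof -
    have "real (Suc a) / real n \<le> real b / real n"
      using that by (intro divide_right_mono) auto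
    then show ?thesis
      by (auto simp: interval_P_def)
  qed
  with assms show ?thesis
    by (metis Int_commute linorder_neqE_nat)
qed

lemma indicator_interval_P_mult:
  "indicator (interval_P n i) u * indicator (interval_P n j) u
     = (if i = j then indicator (interval_P n j) u else (0::'a::comm_ring_1))"
  using interval_P_disjoint[of i j n] by (auto simp: indicator_def)

lemma set_integral_indicator_interval_P:
  assumes "j < n"
  shows "(LINT u:{0..1}|lborel. (indicator (interval_P n j) u :: complex)) = 1 / real n"
proof -
  have "(LINT u:{0..1}|lborel. (indicator (interval_P n j) u :: complex))
      = (LINT u:{0..1}|lborel. complex_of_real (indicator (interval_P n j) u))"
    by (intro set_lebesgue_integral_cong) (auto split: split_indicator)
  also have "\<dots> = complex_of_real (LINT u:{0..1}|lborel. indicator (interval_P n j) u)"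
    by (rule set_integral_complex_of_real)
  also have "(LINT u:{0..1}|lborel. indicator (interval_P n j) u) = integral\<^sup>L lborel (indicator (interval_P n j))"
    using interval_P_subset[OF assms] unfolding set_lebesgue_integral_def
    by (intro Bochner_Integration.integral_cong) (auto split: split_indicator)
  also have "\<dots> = measure lborel (interval_P n j)"
    by simp
  also have "\<dots> = real (Suc j) / real n - real j / real n"
    unfolding interval_P_def by (intro measure_lborel_Ico divide_right_mono) auto
  finally show ?thesis
    by (simp add: diff_divide_distrib[symmetric])
qed

lemma sq_int01_signal_of: "sq_int01 (signal_of n y)"
  unfolding signal_of_def by (intro sq_int01_sum sq_int01_mult sq_int01_indicator) auto

lemma set_integral_sum:
  fixes f :: "'i \<Rightarrow> real \<Rightarrow> complex"
  assumes "finite I" "\<And>i. i \<in> I \<Longrightarrow> set_integrable lborel A (f i)"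
  shows "(LINT u:A|lborel. \<Sum>i\<in>I. f i u) = (\<Sum>i\<in>I. LINT u:A|lborel. f i u)"
    and "set_integrable lborel A (\<lambda>u. \<Sum>i\<in>I. f i u)"
  using assms unfolding set_lebesgue_integral_def set_integrable_def scaleR_sum_right
  by (auto intro!: integral_sum integrable_sum simp del: sum_indicator_scaleR)

lemma set_integrable_mult_indicator_interval_P:
  assumes "sq_int01 psi"
  shows "set_integrable lborel {0..1} (\<lambda>u. psi u * indicator (interval_P n j) u)"
proof -
  have "cnj (indicator (interval_P n j) u :: complex) = indicator (interval_P n j) u" for u
    by (simp split: split_indicator)
  then show ?thesis
    using set_integrable_mult_cnj[OF assms sq_int01_indicator, of "interval_P n j"] by simp
qed

definition cell_avg :: "nat \<Rightarrow> (real \<Rightarrow> complex) \<Rightarrow> nat \<Rightarrow> complex" where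
  "cell_avg n psi j = of_nat n * (LINT u:{0..1}|lborel. psi u * indicator (interval_P n j) u)"

lemma cell_avg_signal_of:
  assumes "j < n"
  shows "cell_avg n (signal_of n x) j = x j"
proof -
  have "(\<lambda>u. signal_of n x u * indicator (interval_P n j) u) = (\<lambda>u. x j * indicator (interval_P n j) u)"
  proof
    fix u
    have "signal_of n x u * indicator (interval_P n j) u
        = (\<Sum>i<n. x i * (indicator (interval_P n i) u * indicator (interval_P n j) u))"
      by (simp only: signal_of_def sum_distrib_right mult.assoc)
    also have "\<dots> = (\<Sum>i<n. if i = j then x j * indicator (interval_P n j) u else 0)"
      by (intro sum.cong) (simp_all add: indicator_interval_P_mult)
    also have "\<dots> = x j * indicator (interval_P n j) u"
      using assms by simp
    finally show "signal_of n x u * indicator (interval_P n j) u = x j * indicator (interval_P n j) u" .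
  qed
  with assms show ?thesis
    unfolding cell_avg_def by (simp add: set_integral_indicator_interval_P)
qed

lemma inner01_signal_of:
  assumes "sq_int01 psi"
  shows "inner01 psi (signal_of n y) = (\<Sum>j<n. cnj (y j) * cell_avg n psi j) / of_nat n"
proof -
  have "psi u * cnj (signal_of n y u) = (\<Sum>j<n. cnj (y j) * (psi u * indicator (interval_P n j) u))" for u
    unfolding signal_of_def cnj_sum sum_distrib_left by (intro sum.cong) (simp_all split: split_indicator)
  then have "inner01 psi (signal_of n y)
      = (\<Sum>j<n. LINT u:{0..1}|lborel. cnj (y j) * (psi u * indicator (interval_P n j) u))"
    unfolding inner01_def
    by (simp only:) (intro set_integral_sum(1) set_integrable_mult_right set_integrable_mult_indicator_interval_P
        assms finite_lessThan)
  also have "\<dots> = (\<Sum>j<n. cnj (y j) * cell_avg n psi j) / of_nat n"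
    by (cases "n = 0") (simp_all add: cell_avg_def sum_divide_distrib)
  finally show ?thesis .
qed

lemma T_op_W_of:
  assumes "sq_int01 psi"
  shows "T_op (W_of n A) psi = signal_of n (mat_vec n (\<lambda>i j. A i j / real n) (cell_avg n psi))"
proof
  fix v
  let ?L = "\<lambda>j. LINT u:{0..1}|lborel. psi u * indicator (interval_P n j) u"
  have integrable: "set_integrable lborel {0..1} (\<lambda>u. c * (psi u * indicator (interval_P n j) u))" for c j
    by (intro set_integrable_mult_right set_integrable_mult_indicator_interval_P assms)
  have "complex_of_real (W_of n A v u) * psi u
      = (\<Sum>i<n. \<Sum>j<n. complex_of_real (A i j * indicator (interval_P n i) v) * (psi u * indicator (interval_P n j) u))"
    for u
    unfolding W_of_def of_real_sum sum_distrib_right by (intro sum.cong) (simp_all split: split_indicator)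
  then have "T_op (W_of n A) psi v = (\<Sum>i<n. \<Sum>j<n. complex_of_real (A i j * indicator (interval_P n i) v) * ?L j)"
    unfolding T_op_def
    by (simp only:) (simp add: set_integral_sum integrable)
  also have "\<dots> = signal_of n (mat_vec n (\<lambda>i j. A i j / real n) (cell_avg n psi)) v"
    unfolding signal_of_def mat_vec_def cell_avg_def sum_distrib_right
    by (intro sum.cong) (auto split: split_indicator)
  finally show "T_op (W_of n A) psi v = signal_of n (mat_vec n (\<lambda>i j. A i j / real n) (cell_avg n psi)) v" .
qed

section \<open>The eigensystem of the graphon operator\<close>

lemma of_real_sqrt_mult_sqrt_divide:
  assumes "n \<noteq> 0"
  shows "complex_of_real (sqrt (real n) * a) * complex_of_real (sqrt (real n) * b) / of_nat n
    = complex_of_real (a * b)"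
proof -
  have "complex_of_real (sqrt (real n) * a) * complex_of_real (sqrt (real n) * b) / of_nat n
      = complex_of_real (sqrt (real n)) * complex_of_real (sqrt (real n)) * complex_of_real (a * b) / of_nat n"
    by (simp add: mult_ac)
  also have "\<dots> = complex_of_real (a * b)"
    using assms by (simp flip: of_real_mult)
  finally show ?thesis .
qed

text \<open>The factor \<open>sqrt n\<close> turns the unit vector \<open>U\<^sub>k\<close> into a unit vector of \<open>L\<^sup>2[0,1]\<close>, since each
  cell has length \<open>1/n\<close>.\<close>

definition eigfun :: "nat \<Rightarrow> (nat \<Rightarrow> nat \<Rightarrow> real) \<Rightarrow> nat \<Rightarrow> real \<Rightarrow> complex" where
  "eigfun n U k = signal_of n (\<lambda>i. complex_of_real (sqrt (real n) * U i k))"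

lemma eigfun_expansion:
  assumes "sq_int01 psi"
  shows "(\<Sum>k<n. complex_of_real (g k) * inner01 psi (eigfun n U k) * eigfun n U k v)
    = signal_of n (mat_vec n (\<lambda>i j. \<Sum>k<n. U i k * g k * U j k) (cell_avg n psi)) v"
proof -
  have "(\<Sum>k<n. complex_of_real (g k) * inner01 psi (eigfun n U k) * complex_of_real (sqrt (real n) * U i k))
      = mat_vec n (\<lambda>i j. \<Sum>k<n. U i k * g k * U j k) (cell_avg n psi) i" for i
  proof (cases "n = 0")
    case False
    have summand: "complex_of_real (g k) * (complex_of_real (sqrt (real n) * U j k) * a / of_nat n)
        * complex_of_real (sqrt (real n) * U i k) = complex_of_real (U i k * g k * U j k) * a" for j k a
    proof -
      have "complex_of_real (g k) * (complex_of_real (sqrt (real n) * U j k) * a / of_nat n)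
          * complex_of_real (sqrt (real n) * U i k)
        = complex_of_real (g k) * a * (complex_of_real (sqrt (real n) * U j k)
          * complex_of_real (sqrt (real n) * U i k) / of_nat n)"
        by (simp add: ac_simps)
      also have "\<dots> = complex_of_real (g k) * a * complex_of_real (U j k * U i k)"
        by (simp only: of_real_sqrt_mult_sqrt_divide[OF False])
      finally show ?thesis
        by (simp add: ac_simps)
    qed
    have "(\<Sum>k<n. complex_of_real (g k) * inner01 psi (eigfun n U k) * complex_of_real (sqrt (real n) * U i k))
        = (\<Sum>k<n. \<Sum>j<n. complex_of_real (g k) * (complex_of_real (sqrt (real n) * U j k) * cell_avg n psi j / of_nat n)
            * complex_of_real (sqrt (real n) * U i k))"
      unfolding eigfun_def inner01_signal_of[OF assms] sum_divide_distrib sum_distrib_left sum_distrib_right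
      by simp
    also have "\<dots> = (\<Sum>j<n. \<Sum>k<n. complex_of_real (U i k * g k * U j k) * cell_avg n psi j)"
      unfolding summand by (rule sum.swap)
    finally show ?thesis
      by (simp add: mat_vec_def of_real_sum sum_distrib_right)
  qed (simp add: mat_vec_def)
  moreover have "(\<Sum>k<n. complex_of_real (g k) * inner01 psi (eigfun n U k) * eigfun n U k v)
      = signal_of n (\<lambda>i. \<Sum>k<n. complex_of_real (g k) * inner01 psi (eigfun n U k)
          * complex_of_real (sqrt (real n) * U i k)) v"
    using signal_of_lincomb[where K = n and c = "\<lambda>k. complex_of_real (g k) * inner01 psi (eigfun n U k)"
        and y = "\<lambda>k i. complex_of_real (sqrt (real n) * U i k)"]
    by (simp only: eigfun_def)
  ultimately show ?thesis
    by simp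
qed

lemma orth_eigdecomp_op_of_mat:
  assumes dec: "orth_eigdecomp_mat n Delta U mu"
  shows "orth_eigdecomp_op (T_op (W_of n (\<lambda>i j. real n * Delta i j))) n mu (eigfun n U)"
  unfolding orth_eigdecomp_op_def
proof (intro conjI allI impI)
  have U_orth: "\<And>k l. k < n \<Longrightarrow> l < n \<Longrightarrow> (\<Sum>j<n. U j k * U j l) = (if k = l then 1 else 0)"
    and U_dec: "\<And>i j. i < n \<Longrightarrow> j < n \<Longrightarrow> Delta i j = (\<Sum>k<n. U i k * mu k * U j k)"
    using dec unfolding orth_eigdecomp_mat_def by auto
  show "sq_int01 (eigfun n U k)" for k
    unfolding eigfun_def by (rule sq_int01_signal_of)
  show "inner01 (eigfun n U k) (eigfun n U l) = (if k = l then 1 else 0)" if "k < n" "l < n" for k l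
  proof -
    have "inner01 (eigfun n U k) (eigfun n U l)
        = (\<Sum>j<n. complex_of_real (sqrt (real n) * U j l) * complex_of_real (sqrt (real n) * U j k) / of_nat n)"
      unfolding inner01_signal_of[OF sq_int01_signal_of] eigfun_def sum_divide_distrib
      by (simp add: cell_avg_signal_of)
    also have "\<dots> = (\<Sum>j<n. complex_of_real (U j l * U j k))"
      using that by (intro sum.cong refl of_real_sqrt_mult_sqrt_divide) auto
    also have "\<dots> = complex_of_real (\<Sum>j<n. U j k * U j l)"
      by (simp add: of_real_sum mult.commute)
    also have "\<dots> = (if k = l then 1 else 0)"
      using that by (simp add: U_orth)
    finally show ?thesis .
  qed
  show "eq01 (T_op (W_of n (\<lambda>i j. real n * Delta i j)) psi)
      (\<lambda>v. \<Sum>k<n. complex_of_real (mu k) * inner01 psi (eigfun n U k) * eigfun n U k v)" if "sq_int01 psi" for psi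
  proof -
    have "T_op (W_of n (\<lambda>i j. real n * Delta i j)) psi
        = signal_of n (mat_vec n (\<lambda>i j. \<Sum>k<n. U i k * mu k * U j k) (cell_avg n psi))"
      unfolding T_op_W_of[OF that] by (intro signal_of_cong mat_vec_cong) (auto simp: U_dec)
    then show ?thesis
      by (simp add: eigfun_expansion[OF that] eq01_refl)
  qed
qed

lemma mat_vec_cell_avg_signal_of: "mat_vec n M (cell_avg n (signal_of n x)) = mat_vec n M x"
  unfolding mat_vec_def by (intro ext sum.cong) (simp_all add: cell_avg_signal_of)

lemma signal_of_mat_vec_eq_eig_op_fun:
  assumes dec: "orth_eigdecomp_mat n Delta U mu"
  shows "signal_of n (mat_vec n (\<lambda>i j. \<Sum>k<n. U i k * h (mu k) * U j k) x)
    = eig_op_fun h n mu (eigfun n U) (signal_of n x)"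
proof
  fix v
  let ?psi = "signal_of n x"
  have "fmat_orthogonal n (fmat_transpose U)"
    using dec by (intro fmat_orthogonal_transpose) (simp add: orth_eigdecomp_mat_iff)
  then have U_orth: "\<And>i j. i < n \<Longrightarrow> j < n \<Longrightarrow> (\<Sum>k<n. U i k * 1 * U j k) = (if i = j then 1 else 0)"
    by (simp add: fmat_eq_def fmat_mult_def fmat_transpose_def fmat_one_def)
  have calculus_part: "(\<Sum>k<n. complex_of_real (h (mu k)) * inner01 ?psi (eigfun n U k) * eigfun n U k v)
      = signal_of n (mat_vec n (\<lambda>i j. \<Sum>k<n. U i k * h (mu k) * U j k) x) v"
    using eigfun_expansion[OF sq_int01_signal_of] by (simp only: mat_vec_cell_avg_signal_of)
  have "mat_vec n (\<lambda>i j. \<Sum>k<n. U i k * 1 * U j k) x i = x i" if "i < n" for i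
  proof -
    have "complex_of_real (\<Sum>k<n. U i k * 1 * U j k) * x j = (if i = j then x j else 0)" if "j < n" for j
      by (simp only: U_orth[OF \<open>i < n\<close> that]) simp
    then have "mat_vec n (\<lambda>i j. \<Sum>k<n. U i k * 1 * U j k) x i = (\<Sum>j<n. if i = j then x j else 0)"
      unfolding mat_vec_def by (intro sum.cong) simp_all
    with that show ?thesis
      by simp
  qed
  then have "signal_of n (mat_vec n (\<lambda>i j. \<Sum>k<n. U i k * 1 * U j k) x) = ?psi"
    by (rule signal_of_cong)
  then have kernel_part: "(\<Sum>k<n. inner01 ?psi (eigfun n U k) * eigfun n U k v) = ?psi v"
    using eigfun_expansion[OF sq_int01_signal_of, where g = "\<lambda>_. 1" and U = U and v = v]
    by (simp add: mat_vec_cell_avg_signal_of)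
  show "signal_of n (mat_vec n (\<lambda>i j. \<Sum>k<n. U i k * h (mu k) * U j k) x) v
      = eig_op_fun h n mu (eigfun n U) ?psi v"
    unfolding eig_op_fun_def calculus_part kernel_part by simp
qed

theorem proposition4p5:
  fixes n :: nat and Delta :: "nat \<Rightarrow> nat \<Rightarrow> real" and h :: "real \<Rightarrow> real"
    and x :: "nat \<Rightarrow> complex"
  assumes "0 < n"
    and "\<forall>i<n. \<forall>j<n. Delta i j = Delta j i"
    and "continuous_on UNIV h"
  shows "eq01 (signal_of n (mat_vec n (mat_fun h n Delta) x))
              (op_fun h (T_op (W_of n (\<lambda>i j. real n * Delta i j))) (signal_of n x))"
proof -
  obtain U mu where dec: "orth_eigdecomp_mat n Delta U mu"
    and mat_fun: "mat_fun h n Delta = (\<lambda>i j. \<Sum>k<n. U i k * h (mu k) * U j k)"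
    using mat_fun_eigdecomp[OF assms(2)] by blast
  have "signal_of n (mat_vec n (mat_fun h n Delta) x) = eig_op_fun h n mu (eigfun n U) (signal_of n x)"
    unfolding mat_fun by (rule signal_of_mat_vec_eq_eig_op_fun[OF dec])
  moreover have "eq01 (op_fun h (T_op (W_of n (\<lambda>i j. real n * Delta i j))) (signal_of n x))
      (eig_op_fun h n mu (eigfun n U) (signal_of n x))"
    by (rule op_fun_eq01_eig_op_fun[OF orth_eigdecomp_op_of_mat[OF dec] sq_int01_signal_of])
  ultimately show ?thesis
    by (simp add: eq01_sym)
qed

end
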